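(* For any algebra $(A,\to,1)$ of type $(2,0)$, it satisfies (Re), (Ex) and (An) if and only if it satisfies (Re), (M), (Ex) and (An).
   Context: Properties, required for all $x,y,z\in A$: (Re) $x\to x=1$; (M) $1\to x=x$; (Ex) $x\to(y\to z)=y\to(x\to z)$; (An) $x\to y=1$ and $y\to x=1$ imply $x=y$. *)

theory Defs
  imports Main
begin

definition prop_Re :: "('a \<Rightarrow> 'a \<Rightarrow> 'a) \<Rightarrow> 'a \<Rightarrow> bool" where
  "prop_Re imp one \<longleftrightarrow> (\<forall>x. imp x x = one)"

definition prop_M :: "('a \<Rightarrow> 'a \<Rightarrow> 'a) \<Rightarrow> 'a \<Rightarrow> bool" where
  "prop_M imp one \<longleftrightarrow> (\<forall>x. imp one x = x)"

definition prop_Ex :: "('a \<Rightarrow> 'a \<Rightarrow> 'a) \<Rightarrow> bool" where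
  "prop_Ex imp \<longleftrightarrow> (\<forall>x y z. imp x (imp y z) = imp y (imp x z))"

definition prop_An :: "('a \<Rightarrow> 'a \<Rightarrow> 'a) \<Rightarrow> 'a \<Rightarrow> bool" where
  "prop_An imp one \<longleftrightarrow> (\<forall>x y. imp x y = one \<and> imp y x = one \<longrightarrow> x = y)"

end

theory Submission
  imports Defs
begin

text \<open>From (Re) and (Ex), both x \<rightarrow> (1 \<rightarrow> x) and 1 \<rightarrow> ((1 \<rightarrow> x) \<rightarrow> x) equal 1.
  The second gives (1 \<rightarrow> x) \<rightarrow> x = 1 once we know that 1 \<rightarrow> y = 1 forces y = 1,
  which itself follows from y \<rightarrow> 1 = y \<rightarrow> (1 \<rightarrow> y) = 1 \<rightarrow> (y \<rightarrow> y) = 1 and (An).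
  Then (An) yields 1 \<rightarrow> x = x.\<close>

lemma imp_one_left_eq_one:
  assumes Re: "prop_Re imp one" and Ex: "prop_Ex imp" and An: "prop_An imp one"
    and one_y: "imp one y = one"
  shows "y = one"
proof -
  have "imp y one = imp y (imp one y)" using one_y by simp
  also have "\<dots> = imp one (imp y y)" using Ex unfolding prop_Ex_def by blast
  also have "\<dots> = one" using Re one_y unfolding prop_Re_def by simp
  finally show "y = one" using An one_y unfolding prop_An_def by blast
qed

lemma prop_M_if_Re_Ex_An:
  assumes Re: "prop_Re imp one" and Ex: "prop_Ex imp" and An: "prop_An imp one"
  shows "prop_M imp one"
  unfolding prop_M_def
proof
  fix x
  have Re': "\<And>z. imp z z = one" and Ex': "\<And>u v w. imp u (imp v w) = imp v (imp u w)"
    using Re Ex unfolding prop_Re_def prop_Ex_def by blast+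
  have to_one: "imp x (imp one x) = one"
    using Ex'[of x one x] Re' by simp
  have "imp one (imp (imp one x) x) = one"
    using Ex'[of one "imp one x" x] Re' by simp
  then have from_one: "imp (imp one x) x = one"
    by (rule imp_one_left_eq_one[OF Re Ex An])
  show "imp one x = x"
    using An to_one from_one unfolding prop_An_def by blast
qed

theorem corollary4p2:
  fixes imp :: "'a \<Rightarrow> 'a \<Rightarrow> 'a" and one :: 'a
  shows "(prop_Re imp one \<and> prop_Ex imp \<and> prop_An imp one) \<longleftrightarrow>
         (prop_Re imp one \<and> prop_M imp one \<and> prop_Ex imp \<and> prop_An imp one)"
  using prop_M_if_Re_Ex_An[of imp one] by blast

end
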